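(* Let $P$ be a field, $X=\{x_1,\ldots,x_n\}$ a finite set, and let $W(X)$ be either the free commutative (unital) algebra $P[x_1,\ldots,x_n]$ or the free associative (unital) algebra over $P$ on $X$. Then $W(X)$ is almost central: every bijection $\mu:W(X)\to W(X)$ satisfying $\mu s=s\mu$ for all $s\in\mathrm{End}(W(X))$ is linear, i.e. there exist $a,b\in P$ with $a\neq 0$ such that $\mu(u)=au+b$ for all $u\in W(X)$.
   Context: $\mathrm{End}(W(X))$ denotes the semigroup of all (unital) algebra endomorphisms of $W(X)$. A bijection $\mu$ of $W(X)$ is called central if it commutes with every endomorphism of $W(X)$; an algebra is called almost central if each of its central bijections is of the form $u\mapsto au+b$ with $a,b\in P$, $a\neq0$. *)

theory Defs
  imports Main "HOL-Library.Poly_Mapping"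
begin

(* Free monoid on 'x (words), written additively so that
  ('x fword \<Rightarrow>\<^sub>0 'k) is the free associative unital algebra over 'k on 'x
  (multiplication = convolution w.r.t. concatenation).*)

datatype 'x fword = FWord "'x list"

instantiation fword :: (type) monoid_add
begin
definition zero_fword :: "'x fword" where "zero_fword = FWord []"
fun plus_fword :: "'x fword \<Rightarrow> 'x fword \<Rightarrow> 'x fword" where
  "plus_fword (FWord a) (FWord b) = FWord (a @ b)"
instance
proof
  fix a b c :: "'x fword"
  show "a + b + c = a + (b + c)" by (cases a; cases b; cases c) simp
  show "0 + a = a" by (cases a) (simp add: zero_fword_def)
  show "a + 0 = a" by (cases a) (simp add: zero_fword_def)
qed
end

(* Polynomial-type algebras W = ('m \<Rightarrow>\<^sub>0 'k), 'm a monoid of monomials.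
  Constants: Poly_Mapping.single 0 c; scalar multiplication c\<cdot>u = single 0 c * u.*)

definition alg_end :: "(('m::monoid_add \<Rightarrow>\<^sub>0 'k::field) \<Rightarrow> ('m \<Rightarrow>\<^sub>0 'k)) \<Rightarrow> bool" where
  "alg_end s \<longleftrightarrow>
     (\<forall>u v. s (u + v) = s u + s v) \<and>
     (\<forall>u v. s (u * v) = s u * s v) \<and>
     s 1 = 1 \<and>
     (\<forall>c u. s (Poly_Mapping.single 0 c * u) = Poly_Mapping.single 0 c * s u)"

definition central_bij :: "(('m::monoid_add \<Rightarrow>\<^sub>0 'k::field) \<Rightarrow> ('m \<Rightarrow>\<^sub>0 'k)) \<Rightarrow> bool" where
  "central_bij \<mu> \<longleftrightarrow> bij \<mu> \<and> (\<forall>s. alg_end s \<longrightarrow> \<mu> \<circ> s = s \<circ> \<mu>)"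

definition almost_central :: "('m::monoid_add \<Rightarrow>\<^sub>0 'k::field) itself \<Rightarrow> bool" where
  "almost_central _ \<longleftrightarrow>
     (\<forall>\<mu> :: ('m \<Rightarrow>\<^sub>0 'k) \<Rightarrow> ('m \<Rightarrow>\<^sub>0 'k). central_bij \<mu> \<longrightarrow>
        (\<exists>a b. a \<noteq> 0 \<and> (\<forall>u. \<mu> u = Poly_Mapping.single 0 a * u + Poly_Mapping.single 0 b)))"

end

theory Submission
  imports Defs "HOL-Computational_Algebra.Polynomial"
begin

(* Let x be a monomial of length one. Substituting one and the same element u for every
  variable is an endomorphism \<sigma>\<^sub>u with \<sigma>\<^sub>u x = u, so a central bijection satisfies
  \<mu> u = \<mu> (\<sigma>\<^sub>u x) = \<sigma>\<^sub>u (\<mu> x) = q(u), where q \<in> P[t] is the image of \<mu> x under the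
  homomorphism W \<rightarrow> P[t] sending each monomial m to t^|m|. Choosing u with \<mu> u = x and
  applying that homomorphism gives t = q \<circ> r for some polynomial r, so q has degree one. *)

lemma poly_mapping_add_single_induct [case_names zero add_single]:
  assumes "P 0" and "\<And>f a b. P f \<Longrightarrow> P (f + Poly_Mapping.single a b)"
  shows "P f"
proof (induction f rule: update_induct)
  case const
  then show ?case using assms(1) .
next
  case (update f a b)
  have "Poly_Mapping.update a b f = f + Poly_Mapping.single a b"
    using update(1)
    by (intro poly_mapping_eqI) (auto simp: lookup_update lookup_add lookup_single in_keys_iff)
  then show ?case using assms(2)[OF update(3)] by simp
qed

lemma single_zero_mult_commute:
  fixes p :: "'m::monoid_add \<Rightarrow>\<^sub>0 'k::comm_semiring_1"
  shows "Poly_Mapping.single 0 c * p = p * Poly_Mapping.single 0 c"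
  by (induction p rule: poly_mapping_add_single_induct)
    (simp_all add: distrib_left distrib_right mult_single mult.commute)

definition pm_lift :: "('k::zero \<Rightarrow> 'r::semiring_0) \<Rightarrow> ('m \<Rightarrow> 'r) \<Rightarrow> ('m \<Rightarrow>\<^sub>0 'k) \<Rightarrow> 'r" where
  "pm_lift sc ev p = (\<Sum>m\<in>Poly_Mapping.keys p. sc (Poly_Mapping.lookup p m) * ev m)"

locale pm_lift_hom =
  fixes sc :: "'k::comm_semiring_1 \<Rightarrow> 'r::ring_1" and ev :: "'m::monoid_add \<Rightarrow> 'r"
  assumes sc_add: "sc (a + b) = sc a + sc b"
    and sc_mult: "sc (a * b) = sc a * sc b"
    and sc_one: "sc 1 = 1"
    and sc_ev_commute: "sc a * ev m = ev m * sc a"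
    and ev_zero: "ev 0 = 1"
    and ev_add: "ev (m + n) = ev m * ev n"
begin

lemma sc_zero: "sc 0 = 0"
  using sc_add[of 0 0] by simp

lemma lift_zero: "pm_lift sc ev 0 = 0"
  by (simp add: pm_lift_def)

lemma lift_single: "pm_lift sc ev (Poly_Mapping.single m c) = sc c * ev m"
  by (cases "c = 0") (simp_all add: pm_lift_def sc_zero)

lemma lift_add: "pm_lift sc ev (p + q) = pm_lift sc ev p + pm_lift sc ev q"
  unfolding pm_lift_def
  by (rule setsum_keys_plus_distrib) (simp_all add: sc_zero sc_add distrib_right)

lemma lift_mult_single:
  "pm_lift sc ev (Poly_Mapping.single a b * Poly_Mapping.single c d)
     = pm_lift sc ev (Poly_Mapping.single a b) * pm_lift sc ev (Poly_Mapping.single c d)"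
proof -
  have "sc b * ev a * (sc d * ev c) = sc b * (ev a * sc d) * ev c"
    by (simp add: mult.assoc)
  also have "\<dots> = sc b * (sc d * ev a) * ev c"
    by (simp add: sc_ev_commute)
  also have "\<dots> = sc b * sc d * (ev a * ev c)"
    by (simp add: mult.assoc)
  finally show ?thesis
    by (simp add: mult_single lift_single sc_mult ev_add)
qed

lemma lift_mult: "pm_lift sc ev (p * q) = pm_lift sc ev p * pm_lift sc ev q"
proof -
  have lift_mult_single_left:
    "pm_lift sc ev (Poly_Mapping.single a b * q) = pm_lift sc ev (Poly_Mapping.single a b) * pm_lift sc ev q"
    for a b q
    by (induction q rule: poly_mapping_add_single_induct)
      (simp_all add: lift_zero distrib_left lift_add lift_mult_single)
  show ?thesis
    by (induction p rule: poly_mapping_add_single_induct)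
      (simp_all add: lift_zero distrib_right lift_add lift_mult_single_left)
qed

lemma lift_one: "pm_lift sc ev 1 = 1"
  using lift_single[of 0 1] by (simp add: sc_one ev_zero)

lemma lift_power: "pm_lift sc ev (p ^ n) = pm_lift sc ev p ^ n"
  by (induction n) (simp_all add: lift_one lift_mult)

lemma lift_single_zero_mult: "pm_lift sc ev (Poly_Mapping.single 0 c * p) = sc c * pm_lift sc ev p"
  by (simp add: lift_mult lift_single ev_zero)

end

definition poly_pm :: "'k::comm_semiring_1 poly \<Rightarrow> ('m::monoid_add \<Rightarrow>\<^sub>0 'k) \<Rightarrow> ('m \<Rightarrow>\<^sub>0 'k)" where
  "poly_pm q u = (\<Sum>i\<le>degree q. Poly_Mapping.single 0 (coeff q i) * u ^ i)"

lemma poly_pm_sum_atMost: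
  assumes "degree q \<le> N"
  shows "poly_pm q u = (\<Sum>i\<le>N. Poly_Mapping.single 0 (coeff q i) * u ^ i)"
  unfolding poly_pm_def
  by (rule sum.mono_neutral_left) (use assms in \<open>auto simp: coeff_eq_0\<close>)

lemma poly_pm_add: "poly_pm (p + q) u = poly_pm p u + poly_pm q u"
proof -
  let ?N = "max (degree p) (degree q)"
  have "degree (p + q) \<le> ?N"
    by (rule degree_add_le) auto
  then show ?thesis
    by (simp add: poly_pm_sum_atMost[of _ ?N] single_add distrib_right sum.distrib)
qed

lemma poly_pm_monom: "poly_pm (monom c n) u = Poly_Mapping.single 0 c * u ^ n"
proof -
  have "poly_pm (monom c n) u = (\<Sum>i\<le>n. Poly_Mapping.single 0 (coeff (monom c n) i) * u ^ i)"
    by (rule poly_pm_sum_atMost) (simp add: degree_monom_le)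
  also have "\<dots> = (\<Sum>i\<le>n. if i = n then Poly_Mapping.single 0 c * u ^ i else 0)"
    by (rule sum.cong) (auto simp: coeff_monom)
  also have "\<dots> = Poly_Mapping.single 0 c * u ^ n"
    by simp
  finally show ?thesis .
qed

lemma poly_pm_degree_one:
  assumes "degree q = 1"
  shows "poly_pm q u = Poly_Mapping.single 0 (coeff q 1) * u + Poly_Mapping.single 0 (coeff q 0)"
  unfolding poly_pm_def assms by (simp add: atMost_Suc add.commute)

lemma pcompose_power: "pcompose (p ^ n) r = pcompose p r ^ n"
  by (induction n) (simp_all add: pcompose_mult pcompose_1)

lemma degree_eq_1_if_pcompose_eq_x:
  fixes p :: "'a::idom poly"
  assumes "pcompose p r = [:0, 1:]"
  shows "degree p = 1"
proof -
  have "degree p * degree r = 1"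
    using degree_pcompose[of p r] assms by simp
  then show ?thesis by simp
qed

locale length_monoid =
  fixes len :: "'m::monoid_add \<Rightarrow> nat"
  assumes len_add: "len (a + b) = len a + len b"
begin

lemma len_zero: "len 0 = 0"
  using len_add[of 0 0] by simp

definition length_poly :: "('m \<Rightarrow>\<^sub>0 'k::field) \<Rightarrow> 'k poly" where
  "length_poly = pm_lift (\<lambda>c. [:c:]) (\<lambda>m. monom 1 (len m))"

definition subst_all :: "('m \<Rightarrow>\<^sub>0 'k::field) \<Rightarrow> ('m \<Rightarrow>\<^sub>0 'k) \<Rightarrow> ('m \<Rightarrow>\<^sub>0 'k)" where
  "subst_all u = pm_lift (Poly_Mapping.single 0) (\<lambda>m. u ^ len m)"

lemma pm_lift_hom_length_poly: "pm_lift_hom (\<lambda>c. [:c:]) (\<lambda>m. monom (1::'k::field) (len m))"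
  by unfold_locales (simp_all add: len_zero len_add mult_monom mult.commute)

lemma pm_lift_hom_subst_all:
  "pm_lift_hom (Poly_Mapping.single 0) (\<lambda>m. (u :: 'm \<Rightarrow>\<^sub>0 'k::field) ^ len m)"
  by unfold_locales
    (simp_all add: single_add mult_single len_zero len_add power_add single_zero_mult_commute)

lemma length_poly_add: "length_poly (f + g) = length_poly f + length_poly g"
  unfolding length_poly_def by (rule pm_lift_hom.lift_add[OF pm_lift_hom_length_poly])

lemma length_poly_single: "length_poly (Poly_Mapping.single m c) = monom c (len m)"
  unfolding length_poly_def
  by (simp add: pm_lift_hom.lift_single[OF pm_lift_hom_length_poly] smult_monom)

lemma alg_end_subst_all: "alg_end (subst_all u)"
  unfolding alg_end_def subst_all_def
  using pm_lift_hom.lift_add[OF pm_lift_hom_subst_all] pm_lift_hom.lift_mult[OF pm_lift_hom_subst_all]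
    pm_lift_hom.lift_one[OF pm_lift_hom_subst_all]
    pm_lift_hom.lift_single_zero_mult[OF pm_lift_hom_subst_all]
  by blast

lemma subst_all_single: "subst_all u (Poly_Mapping.single m c) = Poly_Mapping.single 0 c * u ^ len m"
  unfolding subst_all_def by (rule pm_lift_hom.lift_single[OF pm_lift_hom_subst_all])

lemma subst_all_add: "subst_all u (f + g) = subst_all u f + subst_all u g"
  unfolding subst_all_def by (rule pm_lift_hom.lift_add[OF pm_lift_hom_subst_all])

lemma subst_all_eq_poly_pm: "subst_all u f = poly_pm (length_poly f) u"
proof (induction f rule: poly_mapping_add_single_induct)
  case zero
  then show ?case by (simp add: subst_all_def length_poly_def pm_lift_def poly_pm_def)
next
  case (add_single f m c)
  then show ?case
    by (simp add: subst_all_add length_poly_add poly_pm_add subst_all_single length_poly_single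
        poly_pm_monom)
qed

lemma length_poly_subst_all: "length_poly (subst_all u f) = pcompose (length_poly f) (length_poly u)"
proof (induction f rule: poly_mapping_add_single_induct)
  case zero
  then show ?case by (simp add: subst_all_def length_poly_def pm_lift_def)
next
  case (add_single f m c)
  have "length_poly (Poly_Mapping.single 0 c * u ^ len m) = [:c:] * length_poly u ^ len m"
    unfolding length_poly_def
    by (simp add: pm_lift_hom.lift_mult[OF pm_lift_hom_length_poly]
        pm_lift_hom.lift_power[OF pm_lift_hom_length_poly]
        pm_lift_hom.lift_single[OF pm_lift_hom_length_poly] len_zero)
  then show ?case
    using add_single
    by (simp add: subst_all_add length_poly_add pcompose_add subst_all_single length_poly_single
        monom_altdef pcompose_smult pcompose_power pcompose_pCons)
qed

lemma central_bij_eq_subst_all: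
  assumes "central_bij \<mu>" and "len v = 1"
  shows "\<mu> u = subst_all u (\<mu> (Poly_Mapping.single v 1))"
proof -
  have "\<mu> \<circ> subst_all u = subst_all u \<circ> \<mu>"
    using assms(1) alg_end_subst_all unfolding central_bij_def by blast
  then have "\<mu> (subst_all u (Poly_Mapping.single v 1)) = subst_all u (\<mu> (Poly_Mapping.single v 1))"
    by (metis comp_apply)
  then show ?thesis
    by (simp add: subst_all_single assms(2))
qed

theorem almost_central:
  assumes "len v = 1"
  shows "almost_central TYPE('m \<Rightarrow>\<^sub>0 'k::field)"
  unfolding almost_central_def
proof (intro allI impI)
  fix \<mu> :: "('m \<Rightarrow>\<^sub>0 'k) \<Rightarrow> ('m \<Rightarrow>\<^sub>0 'k)"
  assume central: "central_bij \<mu>"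
  define x where "x = Poly_Mapping.single v (1::'k)"
  define q where "q = length_poly (\<mu> x)"
  obtain u where "\<mu> u = x"
    using central unfolding central_bij_def by (metis bij_pointE)
  then have "x = subst_all u (\<mu> x)"
    using central_bij_eq_subst_all[OF central assms, of u] by (simp add: x_def)
  then have "length_poly x = pcompose q (length_poly u)"
    by (metis q_def length_poly_subst_all)
  then have "pcompose q (length_poly u) = [:0, 1:]"
    by (simp add: x_def length_poly_single assms monom_altdef)
  then have degree_q: "degree q = 1"
    by (rule degree_eq_1_if_pcompose_eq_x)
  then have "coeff q 1 \<noteq> 0"
    by (metis leading_coeff_0_iff degree_0 zero_neq_one)
  moreover have "\<mu> w = Poly_Mapping.single 0 (coeff q 1) * w + Poly_Mapping.single 0 (coeff q 0)" for w
  proof -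
    have "\<mu> w = poly_pm q w"
      using central_bij_eq_subst_all[OF central assms, of w]
      by (simp add: subst_all_eq_poly_pm q_def x_def)
    then show ?thesis
      by (simp add: poly_pm_degree_one degree_q)
  qed
  ultimately show "\<exists>a b. a \<noteq> 0 \<and> (\<forall>u. \<mu> u = Poly_Mapping.single 0 a * u + Poly_Mapping.single 0 b)"
    by blast
qed

end

fun fword_length :: "'x fword \<Rightarrow> nat" where
  "fword_length (FWord w) = length w"

theorem theorem2:
  shows "almost_central TYPE((('x::finite \<Rightarrow>\<^sub>0 nat) \<Rightarrow>\<^sub>0 'k::field))
       \<and> almost_central TYPE(('x fword \<Rightarrow>\<^sub>0 'k))"
proof
  interpret monomial_degree: length_monoid "\<lambda>m :: 'x \<Rightarrow>\<^sub>0 nat. \<Sum>x\<in>UNIV. Poly_Mapping.lookup m x"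
    by unfold_locales (simp add: lookup_add sum.distrib)
  show "almost_central TYPE((('x \<Rightarrow>\<^sub>0 nat) \<Rightarrow>\<^sub>0 'k))"
    by (rule monomial_degree.almost_central[of "Poly_Mapping.single undefined 1"])
      (simp add: lookup_single when_def)
  interpret word_length: length_monoid "fword_length :: 'x fword \<Rightarrow> nat"
  proof
    show "fword_length (a + b) = fword_length a + fword_length b" for a b :: "'x fword"
      by (cases a; cases b) simp
  qed
  show "almost_central TYPE(('x fword \<Rightarrow>\<^sub>0 'k))"
    by (rule word_length.almost_central[of "FWord [undefined]"]) simp
qed

end
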